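(* Let $X$ be a BE-algebra and let $(X,f)$ be an $N$-ideal of $X$. Then $f(y)\le\max\{f(x),f(x*y)\}$ for all $x,y\in X$.
   Context: A BE-algebra is a set $X$ with a binary operation $*$ and a distinguished element $1$ such that for all $x,y,z\in X$: $x*x=1$, $x*1=1$, $1*x=x$, and $x*(y*z)=y*(x*z)$. An ideal of $X$ is a nonempty subset $I\subseteq X$ such that $x*s\in I$ for all $x\in X$, $s\in I$, and $(s*(q*x))*x\in I$ for all $x\in X$ and $s,q\in I$. An $N$-structure on $X$ is a pair $(X,f)$ where $f:X\to[-1,0]$ is any function. For $t\in[-1,0]$ let $C(f;t)=\{x\in X: f(x)\le t\}$. The $N$-structure $(X,f)$ is an $N$-ideal of $X$ if for every $t\in[-1,0]$ the set $C(f;t)$ is either empty or an ideal of $X$. *)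

theory Defs
  imports Main Complex_Main
begin

definition BE_algebra :: "'a set \<Rightarrow> ('a \<Rightarrow> 'a \<Rightarrow> 'a) \<Rightarrow> 'a \<Rightarrow> bool" where
  "BE_algebra X m one \<longleftrightarrow>
     one \<in> X \<and> (\<forall>x\<in>X. \<forall>y\<in>X. m x y \<in> X) \<and>
     (\<forall>x\<in>X. m x x = one) \<and> (\<forall>x\<in>X. m x one = one) \<and> (\<forall>x\<in>X. m one x = x) \<and>
     (\<forall>x\<in>X. \<forall>y\<in>X. \<forall>z\<in>X. m x (m y z) = m y (m x z))"

definition BE_ideal :: "'a set \<Rightarrow> ('a \<Rightarrow> 'a \<Rightarrow> 'a) \<Rightarrow> 'a set \<Rightarrow> bool" where
  "BE_ideal X m I \<longleftrightarrow>
     I \<noteq> {} \<and> I \<subseteq> X \<and>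
     (\<forall>x\<in>X. \<forall>s\<in>I. m x s \<in> I) \<and>
     (\<forall>x\<in>X. \<forall>s\<in>I. \<forall>q\<in>I. m (m s (m q x)) x \<in> I)"

definition N_structure :: "'a set \<Rightarrow> ('a \<Rightarrow> real) \<Rightarrow> bool" where
  "N_structure X f \<longleftrightarrow> (\<forall>x\<in>X. f x \<in> {-1..0})"

definition C_set :: "'a set \<Rightarrow> ('a \<Rightarrow> real) \<Rightarrow> real \<Rightarrow> 'a set" where
  "C_set X f t = {x\<in>X. f x \<le> t}"

definition N_ideal :: "'a set \<Rightarrow> ('a \<Rightarrow> 'a \<Rightarrow> 'a) \<Rightarrow> ('a \<Rightarrow> real) \<Rightarrow> bool" where
  "N_ideal X m f \<longleftrightarrow> N_structure X f \<and>
     (\<forall>t\<in>{-1..0}. C_set X f t = {} \<or> BE_ideal X m (C_set X f t))"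

end

theory Submission
  imports Defs
begin

text \<open>Take t = max (f x) (f (x*y)). The level set C(f;t) contains x and x*y, so it is an
  ideal, and ideals of BE-algebras are closed under modus ponens: with s = x*y, q = x and
  z = y the second ideal axiom gives ((x*y)*(x*y))*y = 1*y = y in C(f;t).\<close>

lemma BE_ideal_modus_ponens:
  assumes "BE_algebra X m one" and "BE_ideal X m I"
    and "x \<in> I" and "m x y \<in> I" and "y \<in> X"
  shows "y \<in> I"
proof -
  have "I \<subseteq> X" and "\<forall>z\<in>X. \<forall>s\<in>I. \<forall>q\<in>I. m (m s (m q z)) z \<in> I"
    using assms(2) unfolding BE_ideal_def by simp_all
  then have "m (m (m x y) (m x y)) y \<in> I" using assms(3-5) by blast
  moreover have "m (m x y) (m x y) = one" and "m one y = y"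
    using assms(1,4,5) \<open>I \<subseteq> X\<close> unfolding BE_algebra_def by auto
  ultimately show ?thesis by simp
qed

lemma N_ideal_level_set_ideal:
  assumes "N_ideal X m f" and "a \<in> X" and "f a \<le> t" and "t \<in> {-1..0}"
  shows "BE_ideal X m (C_set X f t)"
proof -
  have "C_set X f t \<noteq> {}" using assms(2,3) unfolding C_set_def by blast
  then show ?thesis using assms(1,4) unfolding N_ideal_def by blast
qed

theorem mainTheorem3:
  fixes X :: "'a set" and m :: "'a \<Rightarrow> 'a \<Rightarrow> 'a" and one :: 'a and f :: "'a \<Rightarrow> real"
  assumes "BE_algebra X m one"
    and "N_ideal X m f"
    and "x \<in> X" and "y \<in> X"
  shows "f y \<le> max (f x) (f (m x y))"
proof -
  define t where "t = max (f x) (f (m x y))"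
  have xy: "m x y \<in> X" using assms(1,3,4) unfolding BE_algebra_def by blast
  have "t \<in> {-1..0}"
    using assms(2,3) xy unfolding t_def N_ideal_def N_structure_def by auto
  then have ideal: "BE_ideal X m (C_set X f t)"
    using N_ideal_level_set_ideal[OF assms(2,3)] by (simp add: t_def)
  have "x \<in> C_set X f t" and "m x y \<in> C_set X f t"
    using assms(3) xy unfolding C_set_def t_def by auto
  then have "y \<in> C_set X f t"
    using BE_ideal_modus_ponens[OF assms(1) ideal] assms(4) by blast
  then show ?thesis unfolding C_set_def t_def by simp
qed

end
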